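(* Let $\mathcal{G}_1,\ldots,\mathcal{G}_p$ be non-negatively weighted digraphs on the node set $\{1,\ldots,N\}$ whose union contains a directed spanning tree, and let $n\ge1$. For each $i$, let $\delta_i(x)=x-\sum_{j=1}^{\chi_i}\big(\gamma_{i,j}\beta_{i,j}^{\mathrm{T}}\otimes I_n\big)x$ for $x\in\mathbb{R}^{nN}$, with $\chi_i,\gamma_{i,j},\beta_{i,j}$ constructed from $\mathcal{G}_i$ as described in the context. Then $$\bigcap_{i=1}^p\{x\in\mathbb{R}^{nN}:\delta_i(x)=\mathbf{0}\}=\{\mathbf{1}_N\otimes u:\ u\in\mathbb{R}^n\}.$$
   Context: A weighted digraph on $\{1,\ldots,N\}$ has weights $a_{ij}\ge0$, $a_{ii}=0$, with $a_{ij}>0$ iff $(j,i)$ is an edge (directed from $j$ to $i$); its Laplacian is $L=\mathrm{diag}\{\sum_ja_{1j},\ldots,\sum_ja_{Nj}\}-[a_{ij}]$. A digraph contains a directed spanning tree if some node has a directed path to every other node; the union of graphs on the same node set has the union of the edge sets. For a node $j$, $R(j)$ is the set consisting of $j$ and all nodes reachable from $j$ by a directed path. A reach is a maximal such set: $R=R(i)$ for some $i$ with no $j$ such that $R(i)\subsetneq R(j)$. For a digraph $\mathcal{G}$ with Laplacian $L$ and reaches $R_1,\ldots,R_\chi$, the exclusive part of $R_j$ is $H_j=R_j\setminus\bigcup_{l\ne j}R_l$ and its common part is $C_j=R_j\setminus H_j$. It is known that $\mathrm{Ker}(L)$ has a basis $\gamma_1,\ldots,\gamma_\chi\in\mathbb{R}^N$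 with $\gamma_j(s)=0$ for $s\notin R_j$, $\gamma_j(s)=1$ for $s\in H_j$, $\gamma_j(s)\in(0,1)$ for $s\in C_j$, and $\sum_j\gamma_j=\mathbf{1}_N$; these are the vectors $\gamma_j$ used. For each reach $R_j$, let $V_j\subset H_j$ be the set of nodes $i$ with $R(i)=R_j$ (a strongly connected set receiving no edges from outside); let $L_{jj}$ be the principal submatrix of $L$ indexed by $V_j$, and let $v_j\in\mathbb{R}^{|V_j|}$ satisfy $v_j^{\mathrm{T}}L_{jj}=0$ and $v_j^{\mathrm{T}}\mathbf{1}_{|V_j|}=1$. Then $\beta_j\in\mathbb{R}^N$ equals $v_j$ on the coordinates in $V_j$ and $0$ elsewhere (so $\beta_j^{\mathrm{T}}L=0$). Applying this construction to $\mathcal{G}_i$ gives $\chi_i$, $\gamma_{i,j}$, $\beta_{i,j}$. $\otimes$ is the Kronecker product. *)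

theory Defs
  imports "Jordan_Normal_Form.Matrix"
begin

text \<open>Nodes are 0,...,N-1 (the paper's 1,...,N shifted by one).
  A weighted digraph is given by its weight matrix W (N x N), W $$ (i,j) = a_ij;
  there is an edge from j to i iff a_ij > 0.\<close>

definition weight_matrix :: "nat \<Rightarrow> real mat \<Rightarrow> bool" where
  "weight_matrix N W \<longleftrightarrow> W \<in> carrier_mat N N \<and>
     (\<forall>i<N. \<forall>j<N. 0 \<le> W $$ (i,j)) \<and> (\<forall>i<N. W $$ (i,i) = 0)"

definition ones_vec :: "nat \<Rightarrow> real vec" where
  "ones_vec N = vec N (\<lambda>_. 1)"

definition edges :: "nat \<Rightarrow> real mat \<Rightarrow> (nat \<times> nat) set" where
  "edges N W = {(j,i). j < N \<and> i < N \<and> 0 < W $$ (i,j)}"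

definition laplacian :: "nat \<Rightarrow> real mat \<Rightarrow> real mat" where
  "laplacian N W = mat N N (\<lambda>(i,j). (if i = j then (\<Sum>l<N. W $$ (i,l)) else 0) - W $$ (i,j))"

definition has_spanning_tree :: "nat \<Rightarrow> (nat \<times> nat) set \<Rightarrow> bool" where
  "has_spanning_tree N E \<longleftrightarrow> (\<exists>r<N. \<forall>i<N. (r,i) \<in> E\<^sup>*)"

definition reach_set :: "nat \<Rightarrow> real mat \<Rightarrow> nat \<Rightarrow> nat set" where
  "reach_set N W j = {i. (j,i) \<in> (edges N W)\<^sup>*}"

definition is_reach :: "nat \<Rightarrow> real mat \<Rightarrow> nat set \<Rightarrow> bool" where
  "is_reach N W R \<longleftrightarrow> (\<exists>i<N. R = reach_set N W i \<and> \<not> (\<exists>j<N. R \<subset> reach_set N W j))"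

definition exclusive_part :: "(nat \<Rightarrow> nat set) \<Rightarrow> nat \<Rightarrow> nat \<Rightarrow> nat set" where
  "exclusive_part R chi j = R j - (\<Union>l\<in>{..<chi} - {j}. R l)"

definition common_part :: "(nat \<Rightarrow> nat set) \<Rightarrow> nat \<Rightarrow> nat \<Rightarrow> nat set" where
  "common_part R chi j = R j - exclusive_part R chi j"

definition root_set :: "nat \<Rightarrow> real mat \<Rightarrow> nat set \<Rightarrow> nat set" where
  "root_set N W Rj = {i. i < N \<and> reach_set N W i = Rj}"

text \<open>R enumerates the reaches without repetition; gamma 0..chi-1 is the kernel basis
  of the Laplacian with the stated properties; beta j is v_j on V_j and 0 elsewhere,
  where v_j^T L_jj = 0 and v_j^T 1 = 1.\<close>
definition reach_data ::
  "nat \<Rightarrow> real mat \<Rightarrow> nat \<Rightarrow> (nat \<Rightarrow> nat set) \<Rightarrow> (nat \<Rightarrow> real vec) \<Rightarrow> (nat \<Rightarrow> real vec) \<Rightarrow> bool" where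
  "reach_data N W chi R gam bet \<longleftrightarrow>
     {R j | j. j < chi} = {S. is_reach N W S} \<and> inj_on R {..<chi} \<and>
     (\<forall>j<chi. gam j \<in> carrier_vec N \<and> laplacian N W *\<^sub>v gam j = 0\<^sub>v N) \<and>
     (\<forall>c. finsum_vec TYPE(real) N (\<lambda>j. c j \<cdot>\<^sub>v gam j) {..<chi} = 0\<^sub>v N \<longrightarrow> (\<forall>j<chi. c j = 0)) \<and>
     (\<forall>y \<in> carrier_vec N. laplacian N W *\<^sub>v y = 0\<^sub>v N \<longrightarrow>
        (\<exists>c. y = finsum_vec TYPE(real) N (\<lambda>j. c j \<cdot>\<^sub>v gam j) {..<chi})) \<and>
     (\<forall>j<chi. \<forall>s<N.
        (s \<notin> R j \<longrightarrow> gam j $ s = 0) \<and>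
        (s \<in> exclusive_part R chi j \<longrightarrow> gam j $ s = 1) \<and>
        (s \<in> common_part R chi j \<longrightarrow> 0 < gam j $ s \<and> gam j $ s < 1)) \<and>
     finsum_vec TYPE(real) N gam {..<chi} = ones_vec N \<and>
     (\<forall>j<chi. bet j \<in> carrier_vec N \<and>
        (\<forall>s<N. s \<notin> root_set N W (R j) \<longrightarrow> bet j $ s = 0) \<and>
        (\<forall>t\<in>root_set N W (R j). (\<Sum>s\<in>root_set N W (R j). bet j $ s * laplacian N W $$ (s,t)) = 0) \<and>
        (\<Sum>s\<in>root_set N W (R j). bet j $ s) = 1)"

definition kron_mat :: "'a::times mat \<Rightarrow> 'a mat \<Rightarrow> 'a mat" where
  "kron_mat A B = mat (dim_row A * dim_row B) (dim_col A * dim_col B)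
     (\<lambda>(i,j). A $$ (i div dim_row B, j div dim_col B) * B $$ (i mod dim_row B, j mod dim_col B))"

definition kron_vec :: "'a::times vec \<Rightarrow> 'a vec \<Rightarrow> 'a vec" where
  "kron_vec a b = vec (dim_vec a * dim_vec b) (\<lambda>i. a $ (i div dim_vec b) * b $ (i mod dim_vec b))"

definition delta_map :: "nat \<Rightarrow> nat \<Rightarrow> nat \<Rightarrow> (nat \<Rightarrow> real vec) \<Rightarrow> (nat \<Rightarrow> real vec) \<Rightarrow> real vec \<Rightarrow> real vec" where
  "delta_map N n chi gam bet x =
     x - finsum_vec TYPE(real) (N * n) (\<lambda>j. kron_mat (mat_of_cols N [gam j] * mat_of_rows N [bet j]) (1\<^sub>m n) *\<^sub>v x) {..<chi}"

end

theory Submission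
  imports Defs
begin

(*
  Index R^(nN) blockwise, x = (x (s * n + k)) with node s and component k. For each k the slice
  y_k = (x (s * n + k))_s is mapped by delta_i to y_k - sum_j gamma_ij (beta_ij . y_k), so
  delta_i x = 0 makes y_k a combination of the gamma_ij, hence a kernel vector of L_i: y_k is
  harmonic, i.e. at every node it is the weighted average of its in-neighbours. A function harmonic
  for all G_i is constant along the union graph: a maximum at a node forces the same value at every
  in-neighbour, so it propagates back to the root of the spanning tree; the same holds for the
  minimum, and max = min. Conversely 1_N \<otimes> u is fixed by each delta_i, because
  sum_j gamma_ij = 1 and every beta_ij sums to 1.
*)

lemma sum_lessThan_mult_blocks:
  fixes g :: "nat \<Rightarrow> 'a::comm_monoid_add"
  shows "(\<Sum>c<N * n. g c) = (\<Sum>s<N. \<Sum>k<n. g (s * n + k))"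
proof -
  have "(\<Sum>c\<in>{s * n..<s * n + n}. g c) = (\<Sum>k<n. g (s * n + k))" for s
    using sum.shift_bounds_nat_ivl[of g 0 "s * n" n] by (simp add: atLeast0LessThan add.commute)
  then show ?thesis using sum.nat_group[of g n N] by simp
qed

lemma block_index_less:
  fixes s k :: nat
  assumes "s < N" and "k < n"
  shows "s * n + k < N * n"
proof -
  have "s * n + k < Suc s * n" using assms(2) by simp
  also have "\<dots> \<le> N * n" using assms(1) by (intro mult_le_mono1) simp
  finally show ?thesis .
qed

lemma
  fixes a :: nat
  assumes "a < N * n"
  shows block_index_div_less: "a div n < N" and block_index_mod_less: "a mod n < n"
proof -
  show "a div n < N" using assms by (simp add: less_mult_imp_div_less)
  have "0 < n" using assms by (cases n) auto
  then show "a mod n < n" by simp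
qed

lemma dim_row_kron_mat [simp]: "dim_row (kron_mat A B) = dim_row A * dim_row B"
  by (simp add: kron_mat_def)

lemma index_kron_one_mult_vec:
  fixes A :: "'a::comm_semiring_1 mat"
  assumes A: "A \<in> carrier_mat N M" and x: "x \<in> carrier_vec (M * n)" and i: "i < N * n"
  shows "(kron_mat A (1\<^sub>m n) *\<^sub>v x) $ i = (\<Sum>s<M. A $$ (i div n, s) * x $ (s * n + i mod n))"
proof -
  have n: "0 < n" using i by (cases n) auto
  have "(kron_mat A (1\<^sub>m n) *\<^sub>v x) $ i
      = (\<Sum>c<M * n. A $$ (i div n, c div n) * 1\<^sub>m n $$ (i mod n, c mod n) * x $ c)"
    using A x i by (simp add: kron_mat_def scalar_prod_def lessThan_atLeast0)
  also have "\<dots> = (\<Sum>s<M. \<Sum>k<n. A $$ (i div n, s) * 1\<^sub>m n $$ (i mod n, k) * x $ (s * n + k))"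
    by (subst sum_lessThan_mult_blocks) (simp add: n)
  also have "\<dots> = (\<Sum>s<M. A $$ (i div n, s) * x $ (s * n + i mod n))"
    using n by (simp add: if_distrib if_distribR cong: if_cong)
  finally show ?thesis .
qed

lemma outer_product_carrier_mat:
  "mat_of_cols N [g] * mat_of_rows M [b] \<in> carrier_mat N M"
  by (intro carrier_matI) simp_all

lemma index_outer_product:
  assumes "g \<in> carrier_vec N" and "b \<in> carrier_vec M" and "a < N" and "c < M"
  shows "(mat_of_cols N [g] * mat_of_rows M [b]) $$ (a, c) = g $ a * b $ c"
  using assms by (simp add: scalar_prod_def mat_of_cols_def mat_of_rows_def)

lemma
  assumes "\<And>j. j < chi \<Longrightarrow> gam j \<in> carrier_vec N \<and> bet j \<in> carrier_vec N"
    and x: "x \<in> carrier_vec (N * n)"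
  shows dim_delta_map: "delta_map N n chi gam bet x \<in> carrier_vec (N * n)"
    and index_delta_map: "i < N * n \<Longrightarrow> delta_map N n chi gam bet x $ i
      = x $ i - (\<Sum>j<chi. gam j $ (i div n) * (\<Sum>s<N. bet j $ s * x $ (s * n + i mod n)))"
proof -
  let ?P = "\<lambda>j. kron_mat (mat_of_cols N [gam j] * mat_of_rows N [bet j]) (1\<^sub>m n) *\<^sub>v x"
  have P: "?P \<in> {..<chi} \<rightarrow> carrier_vec (N * n)"
    by (intro Pi_I carrier_vecI) simp
  then have sum_P: "finsum_vec TYPE(real) (N * n) ?P {..<chi} \<in> carrier_vec (N * n)"
    by (intro finsum_vec_closed) auto
  then show "delta_map N n chi gam bet x \<in> carrier_vec (N * n)"
    using x unfolding delta_map_def by simp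
  assume i: "i < N * n"
  have "finsum_vec TYPE(real) (N * n) ?P {..<chi} $ i = (\<Sum>j<chi. ?P j $ i)"
    using i P by (intro index_finsum_vec) auto
  also have "\<dots> = (\<Sum>j<chi. gam j $ (i div n) * (\<Sum>s<N. bet j $ s * x $ (s * n + i mod n)))"
  proof (intro sum.cong refl)
    fix j assume "j \<in> {..<chi}"
    with assms have g: "gam j \<in> carrier_vec N" and b: "bet j \<in> carrier_vec N" by auto
    have "i div n < N" using i by (rule block_index_div_less)
    then show "?P j $ i = gam j $ (i div n) * (\<Sum>s<N. bet j $ s * x $ (s * n + i mod n))"
      using index_kron_one_mult_vec[OF outer_product_carrier_mat x i] g b
      by (simp del: index_mult_mat add: index_outer_product sum_distrib_left mult.assoc)
  qed
  finally show "delta_map N n chi gam bet x $ i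
      = x $ i - (\<Sum>j<chi. gam j $ (i div n) * (\<Sum>s<N. bet j $ s * x $ (s * n + i mod n)))"
    using i x sum_P unfolding delta_map_def by simp
qed

lemma index_mult_mat_vec_sum:
  assumes "A \<in> carrier_mat N M" and "v \<in> carrier_vec M" and "s < N"
  shows "(A *\<^sub>v v) $ s = (\<Sum>t<M. A $$ (s, t) * v $ t)"
  using assms by (simp add: scalar_prod_def lessThan_atLeast0)

lemma laplacian_carrier_mat: "laplacian N W \<in> carrier_mat N N"
  by (simp add: laplacian_def)

definition harmonic :: "nat \<Rightarrow> real mat \<Rightarrow> (nat \<Rightarrow> real) \<Rightarrow> bool" where
  "harmonic N W y \<longleftrightarrow> (\<forall>s<N. (\<Sum>t<N. W $$ (s, t) * (y s - y t)) = 0)"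

lemma laplacian_row_sum:
  assumes "s < N"
  shows "(\<Sum>t<N. laplacian N W $$ (s, t) * y t) = (\<Sum>t<N. W $$ (s, t) * (y s - y t))"
proof -
  have "(\<Sum>t<N. laplacian N W $$ (s, t) * y t)
      = (\<Sum>t<N. (if s = t then (\<Sum>l<N. W $$ (s, l)) * y t else 0) - W $$ (s, t) * y t)"
    using assms by (intro sum.cong refl) (simp add: laplacian_def left_diff_distrib)
  also have "\<dots> = (\<Sum>t<N. W $$ (s, t)) * y s - (\<Sum>t<N. W $$ (s, t) * y t)"
    using assms by (simp add: sum_subtractf sum.delta)
  also have "\<dots> = (\<Sum>t<N. W $$ (s, t) * (y s - y t))"
    by (simp add: sum_distrib_right right_diff_distrib sum_subtractf)
  finally show ?thesis .
qed

lemma harmonic_of_laplacian_kernel: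
  assumes "\<And>j. j < m \<Longrightarrow> v j \<in> carrier_vec N \<and> laplacian N W *\<^sub>v v j = 0\<^sub>v N"
  shows "harmonic N W (\<lambda>t. \<Sum>j<m. c j * v j $ t)"
  unfolding harmonic_def
proof (intro allI impI)
  fix s assume s: "s < N"
  have kernel: "(\<Sum>t<N. laplacian N W $$ (s, t) * v j $ t) = 0" if "j < m" for j
  proof -
    have "(laplacian N W *\<^sub>v v j) $ s = 0" using assms[OF that] s by simp
    then show ?thesis
      using index_mult_mat_vec_sum[OF laplacian_carrier_mat _ s] assms[OF that] by metis
  qed
  have "(\<Sum>t<N. laplacian N W $$ (s, t) * (\<Sum>j<m. c j * v j $ t))
      = (\<Sum>j<m. c j * (\<Sum>t<N. laplacian N W $$ (s, t) * v j $ t))"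
    by (simp add: sum_distrib_left sum.swap[of _ "{..<N}"] mult_ac)
  also have "\<dots> = 0" using kernel by simp
  finally show "(\<Sum>t<N. W $$ (s, t) * ((\<Sum>j<m. c j * v j $ s) - (\<Sum>j<m. c j * v j $ t))) = 0"
    using laplacian_row_sum[OF s] by simp
qed

lemma harmonic_uminus: "harmonic N W y \<Longrightarrow> harmonic N W (\<lambda>t. - y t)"
  by (simp only: harmonic_def minus_diff_minus mult_minus_right sum_negf neg_equal_0_iff_equal)

lemma harmonic_cong: "(\<And>t. t < N \<Longrightarrow> y t = y' t) \<Longrightarrow> harmonic N W y = harmonic N W y'"
  by (simp add: harmonic_def)

lemma harmonic_max_edge:
  assumes W: "weight_matrix N W" and y: "harmonic N W y"
    and max: "\<forall>t<N. y t \<le> y a" and e: "(r, a) \<in> edges N W"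
  shows "y r = y a"
proof -
  from e have r: "r < N" and a: "a < N" and w: "0 < W $$ (a, r)" by (auto simp: edges_def)
  have nonneg: "0 \<le> W $$ (a, t) * (y a - y t)" if "t \<in> {..<N}" for t
    using W max a that unfolding weight_matrix_def by simp
  have "(\<Sum>t<N. W $$ (a, t) * (y a - y t)) = 0" using y a by (simp add: harmonic_def)
  then have "\<forall>t\<in>{..<N}. W $$ (a, t) * (y a - y t) = 0"
    using sum_nonneg_eq_0_iff[OF finite_lessThan nonneg] by simp
  then have "W $$ (a, r) * (y a - y r) = 0" using r by simp
  with w show ?thesis by simp
qed

lemma harmonic_max_propagates:
  assumes W: "\<forall>i<p. weight_matrix N (W i)" and y: "\<forall>i<p. harmonic N (W i) y"
    and max: "\<forall>t<N. y t \<le> y z" and path: "(r, z) \<in> (\<Union>i<p. edges N (W i))\<^sup>*"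
  shows "y r = y z"
  using path
proof (induction rule: converse_rtrancl_induct)
  case base
  show ?case by simp
next
  case (step r a)
  then obtain i where "i < p" and "(r, a) \<in> edges N (W i)" by auto
  moreover have "\<forall>t<N. y t \<le> y a" using max step.IH by simp
  ultimately have "y r = y a" using W y harmonic_max_edge by blast
  with step.IH show ?case by simp
qed

lemma harmonic_le_root:
  assumes W: "\<forall>i<p. weight_matrix N (W i)" and y: "\<forall>i<p. harmonic N (W i) y"
    and root: "\<forall>t<N. (r, t) \<in> (\<Union>i<p. edges N (W i))\<^sup>*" and r: "r < N" and t: "t < N"
  shows "y t \<le> y r"
proof -
  have "Max (y ` {..<N}) \<in> y ` {..<N}" using r by (intro Max_in) auto
  then obtain z where z: "z < N" and z_max: "y z = Max (y ` {..<N})" by auto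
  have max: "\<forall>t<N. y t \<le> y z"
    unfolding z_max by (intro allI impI Max_ge) auto
  have "y r = y z" using harmonic_max_propagates[OF W y max] root z by blast
  then show ?thesis using max t by simp
qed

lemma harmonic_const_if_spanning_tree:
  assumes W: "\<forall>i<p. weight_matrix N (W i)" and y: "\<forall>i<p. harmonic N (W i) y"
    and tree: "has_spanning_tree N (\<Union>i<p. edges N (W i))" and s: "s < N" and t: "t < N"
  shows "y s = y t"
proof -
  obtain r where r: "r < N" and root: "\<forall>t<N. (r, t) \<in> (\<Union>i<p. edges N (W i))\<^sup>*"
    using tree unfolding has_spanning_tree_def by blast
  have y': "\<forall>i<p. harmonic N (W i) (\<lambda>t. - y t)" using y harmonic_uminus by blast
  have "y u = y r" if "u < N" for u
    using harmonic_le_root[OF W y root r that] harmonic_le_root[OF W y' root r that] by linarith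
  then show ?thesis using s t by metis
qed

lemma harmonic_block_if_delta_map_zero:
  assumes gb: "\<And>j. j < chi \<Longrightarrow>
      gam j \<in> carrier_vec N \<and> bet j \<in> carrier_vec N \<and> laplacian N W *\<^sub>v gam j = 0\<^sub>v N"
    and x: "x \<in> carrier_vec (N * n)" and zero: "delta_map N n chi gam bet x = 0\<^sub>v (N * n)"
    and k: "k < n"
  shows "harmonic N W (\<lambda>t. x $ (t * n + k))"
proof -
  let ?c = "\<lambda>j. \<Sum>s<N. bet j $ s * x $ (s * n + k)"
  have carrier: "gam j \<in> carrier_vec N \<and> bet j \<in> carrier_vec N" if "j < chi" for j
    using gb[OF that] by blast
  have "x $ (t * n + k) = (\<Sum>j<chi. ?c j * gam j $ t)" if t: "t < N" for t
  proof -
    have i: "t * n + k < N * n" using t k by (rule block_index_less)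
    have "(t * n + k) div n = t" and "(t * n + k) mod n = k" using k by simp_all
    moreover have "delta_map N n chi gam bet x $ (t * n + k) = 0" using zero i by simp
    ultimately show ?thesis
      using index_delta_map[where chi = chi and gam = gam and bet = bet, OF carrier x i]
      by (simp add: mult_ac)
  qed
  then have "harmonic N W (\<lambda>t. x $ (t * n + k)) = harmonic N W (\<lambda>t. \<Sum>j<chi. ?c j * gam j $ t)"
    by (intro harmonic_cong)
  also have "\<dots>"
    using gb by (intro harmonic_of_laplacian_kernel) blast
  finally show ?thesis .
qed

lemma
  assumes u: "u \<in> carrier_vec n"
  shows kron_ones_vec_carrier: "kron_vec (ones_vec N) u \<in> carrier_vec (N * n)"
    and index_kron_ones_vec: "a < N * n \<Longrightarrow> kron_vec (ones_vec N) u $ a = u $ (a mod n)"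
  using u by (auto simp: kron_vec_def ones_vec_def less_mult_imp_div_less)

lemma eq_kron_ones_vecI:
  assumes x: "x \<in> carrier_vec (N * n)" and u: "u \<in> carrier_vec n"
    and blocks: "\<And>t k. t < N \<Longrightarrow> k < n \<Longrightarrow> x $ (t * n + k) = u $ k"
  shows "x = kron_vec (ones_vec N) u"
proof (rule eq_vecI)
  show "dim_vec x = dim_vec (kron_vec (ones_vec N) u)"
    using x kron_ones_vec_carrier[OF u, where N = N] by simp
next
  fix a assume "a < dim_vec (kron_vec (ones_vec N) u)"
  then have a: "a < N * n" using kron_ones_vec_carrier[OF u, where N = N] by simp
  then have "a div n < N" and "a mod n < n"
    by (rule block_index_div_less, rule block_index_mod_less)
  then have "x $ (a div n * n + a mod n) = u $ (a mod n)" by (rule blocks)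
  then show "x $ a = kron_vec (ones_vec N) u $ a" using index_kron_ones_vec[OF u a] by simp
qed

lemma delta_map_kron_ones_vec:
  assumes gb: "\<And>j. j < chi \<Longrightarrow>
      gam j \<in> carrier_vec N \<and> bet j \<in> carrier_vec N \<and> (\<Sum>s<N. bet j $ s) = 1"
    and gam_sum: "finsum_vec TYPE(real) N gam {..<chi} = ones_vec N" and u: "u \<in> carrier_vec n"
  shows "delta_map N n chi gam bet (kron_vec (ones_vec N) u) = 0\<^sub>v (N * n)"
proof -
  let ?x = "kron_vec (ones_vec N) u"
  have carrier: "gam j \<in> carrier_vec N \<and> bet j \<in> carrier_vec N" if "j < chi" for j
    using gb[OF that] by blast
  have x: "?x \<in> carrier_vec (N * n)" using u by (rule kron_ones_vec_carrier)
  show ?thesis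
  proof (rule eq_vecI)
    fix a assume "a < dim_vec (0\<^sub>v (N * n))"
    then have a: "a < N * n" by simp
    then have div: "a div n < N" and mod: "a mod n < n"
      by (rule block_index_div_less, rule block_index_mod_less)
    have inner: "(\<Sum>s<N. bet j $ s * ?x $ (s * n + a mod n)) = u $ (a mod n)" if "j < chi" for j
    proof -
      have "(\<Sum>s<N. bet j $ s * ?x $ (s * n + a mod n)) = (\<Sum>s<N. bet j $ s) * u $ (a mod n)"
        using mod index_kron_ones_vec[OF u block_index_less[OF _ mod]] by (simp add: sum_distrib_right)
      then show ?thesis using gb[OF that] by simp
    qed
    have "(\<Sum>j<chi. gam j $ (a div n) * (\<Sum>s<N. bet j $ s * ?x $ (s * n + a mod n)))
        = (\<Sum>j<chi. gam j $ (a div n)) * u $ (a mod n)"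
      by (simp add: inner sum_distrib_right)
    also have "(\<Sum>j<chi. gam j $ (a div n)) = finsum_vec TYPE(real) N gam {..<chi} $ (a div n)"
      using div carrier by (intro index_finsum_vec[symmetric]) auto
    also have "\<dots> = 1" using gam_sum div by (simp add: ones_vec_def)
    finally show "delta_map N n chi gam bet ?x $ a = 0\<^sub>v (N * n) $ a"
      using index_delta_map[where chi = chi and gam = gam and bet = bet, OF carrier x a]
        index_kron_ones_vec[OF u a] a by simp
  qed (use dim_delta_map[where chi = chi and gam = gam and bet = bet, OF carrier x] in simp)
qed

lemma eq_kron_ones_vec_if_delta_maps_zero:
  assumes W: "\<forall>i<p. weight_matrix N (W i)" and tree: "has_spanning_tree N (\<Union>i<p. edges N (W i))"
    and gb: "\<And>i j. i < p \<Longrightarrow> j < chi i \<Longrightarrow> gam i j \<in> carrier_vec N \<and> bet i j \<in> carrier_vec N \<and>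
      laplacian N (W i) *\<^sub>v gam i j = 0\<^sub>v N"
    and x: "x \<in> carrier_vec (N * n)"
    and zero: "\<And>i. i < p \<Longrightarrow> delta_map N n (chi i) (gam i) (bet i) x = 0\<^sub>v (N * n)"
  shows "x = kron_vec (ones_vec N) (vec n (\<lambda>k. x $ k))"
proof (rule eq_kron_ones_vecI[OF x])
  fix t k assume t: "t < N" and k: "k < n"
  have harm: "\<forall>i<p. harmonic N (W i) (\<lambda>t. x $ (t * n + k))"
    using gb x zero k by (blast intro: harmonic_block_if_delta_map_zero)
  have "x $ (t * n + k) = x $ (0 * n + k)"
    using t harm by (intro harmonic_const_if_spanning_tree[OF W _ tree, where y = "\<lambda>t. x $ (t * n + k)"])
      simp_all
  then show "x $ (t * n + k) = vec n (\<lambda>k. x $ k) $ k" using k by simp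
qed simp

lemma reach_dataD:
  assumes "reach_data N W chi R gam bet" and "j < chi"
  shows "gam j \<in> carrier_vec N" and "bet j \<in> carrier_vec N"
    and "laplacian N W *\<^sub>v gam j = 0\<^sub>v N" and "(\<Sum>s<N. bet j $ s) = 1"
proof -
  show "gam j \<in> carrier_vec N" "bet j \<in> carrier_vec N" "laplacian N W *\<^sub>v gam j = 0\<^sub>v N"
    using assms unfolding reach_data_def by auto
  have "(\<Sum>s<N. bet j $ s) = (\<Sum>s\<in>root_set N W (R j). bet j $ s)"
    using assms unfolding reach_data_def
    by (intro sum.mono_neutral_right) (auto simp: root_set_def)
  also have "\<dots> = 1" using assms unfolding reach_data_def by auto
  finally show "(\<Sum>s<N. bet j $ s) = 1" .
qed

lemma reach_data_sum_gam:
  "reach_data N W chi R gam bet \<Longrightarrow> finsum_vec TYPE(real) N gam {..<chi} = ones_vec N"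
  unfolding reach_data_def by blast

theorem lemma8:
  fixes N n p :: nat and W :: "nat \<Rightarrow> real mat"
    and chi :: "nat \<Rightarrow> nat" and R :: "nat \<Rightarrow> nat \<Rightarrow> nat set"
    and gam bet :: "nat \<Rightarrow> nat \<Rightarrow> real vec"
  assumes "n \<ge> 1"
    and "\<forall>i<p. weight_matrix N (W i)"
    and "has_spanning_tree N (\<Union>i<p. edges N (W i))"
    and "\<forall>i<p. reach_data N (W i) (chi i) (R i) (gam i) (bet i)"
  shows "{x \<in> carrier_vec (n * N). \<forall>i<p. delta_map N n (chi i) (gam i) (bet i) x = 0\<^sub>v (n * N)}
         = {kron_vec (ones_vec N) u | u. u \<in> carrier_vec n}"
proof -
  note weights = assms(2) and tree = assms(3)
  have data: "gam i j \<in> carrier_vec N \<and> bet i j \<in> carrier_vec N \<and>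
      laplacian N (W i) *\<^sub>v gam i j = 0\<^sub>v N \<and> (\<Sum>s<N. bet i j $ s) = 1"
    if "i < p" and "j < chi i" for i j
    using reach_dataD[OF assms(4)[rule_format, OF that(1)] that(2)] by blast
  show ?thesis
  proof (intro equalityI subsetI)
    fix x assume "x \<in> {x \<in> carrier_vec (n * N). \<forall>i<p. delta_map N n (chi i) (gam i) (bet i) x = 0\<^sub>v (n * N)}"
    then have x: "x \<in> carrier_vec (N * n)"
      and zero: "\<And>i. i < p \<Longrightarrow> delta_map N n (chi i) (gam i) (bet i) x = 0\<^sub>v (N * n)"
      by (simp_all add: mult.commute)
    have "x = kron_vec (ones_vec N) (vec n (\<lambda>k. x $ k))"
      by (rule eq_kron_ones_vec_if_delta_maps_zero[OF weights tree _ x zero]) (use data in blast)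
    then show "x \<in> {kron_vec (ones_vec N) u | u. u \<in> carrier_vec n}"
      by (intro CollectI exI[of _ "vec n (\<lambda>k. x $ k)"]) simp
  next
    fix x assume "x \<in> {kron_vec (ones_vec N) u | u. u \<in> carrier_vec n}"
    then obtain u where u: "u \<in> carrier_vec n" and x_def: "x = kron_vec (ones_vec N) u" by blast
    have "delta_map N n (chi i) (gam i) (bet i) x = 0\<^sub>v (N * n)" if "i < p" for i
      unfolding x_def
      by (rule delta_map_kron_ones_vec[OF _ reach_data_sum_gam[OF assms(4)[rule_format, OF that]] u])
        (use data[OF that] in blast)
    then show "x \<in> {x \<in> carrier_vec (n * N). \<forall>i<p. delta_map N n (chi i) (gam i) (bet i) x = 0\<^sub>v (n * N)}"
      using kron_ones_vec_carrier[OF u, where N = N] x_def by (simp add: mult.commute)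
  qed
qed

end
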